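(* If $(X,d_X)$ is a locally finite metric space (every bounded subset is finite), then $\Delta_X^{(c)}(R)\leq R$ for all $R\in[0,\infty)$. Consequently, for every $\varepsilon>0$, every locally finite metric space $(2+\varepsilon)$-Lipschitz embeds into $c_0^+$.
   Context: For a cover $\mathcal{U}$ of $X$: $\mathrm{diam}(\mathcal{U})=\sup_{U\in\mathcal{U}}\mathrm{diam}(U)$; $\mathcal{L}(\mathcal{U})=\sup\{d\in[0,\infty): \text{every } E\subseteq X \text{ with } \mathrm{diam}(E)<d \text{ is contained in some } U\in\mathcal{U}\}$; point-finite means each point lies in only finitely many members. $\Delta_X^{(c)}(R)=\inf\{\mathrm{diam}(\mathcal{U}): \mathcal{U} \text{ point-finite cover of } X,\ \mathcal{L}(\mathcal{U})\geq R\}$. $c_0^+=\{(x_i)_{i\in\mathbb{N}}\in c_0: x_i\geq0\ \forall i\}$ with the sup-norm metric. A map $f$ is a $K$-Lipschitz embedding if it is injective and $\mathrm{Lip}(f)\cdot\mathrm{Lip}(f^{-1})\leq K$, where $\mathrm{Lip}$ denotes the Lipschitz constant. *)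

theory Defs
  imports "HOL-Analysis.Analysis"
begin

definition ediam :: "'a::metric_space set \<Rightarrow> ereal" where
  "ediam S = (if S = {} then 0 else (SUP p\<in>S \<times> S. ereal (dist (fst p) (snd p))))"

definition cover_diam :: "'a::metric_space set set \<Rightarrow> ereal" where
  "cover_diam \<U> = (SUP U\<in>\<U>. ediam U)"

definition lebesgue_num :: "'a::metric_space set \<Rightarrow> 'a set set \<Rightarrow> ereal" where
  "lebesgue_num X \<U> = Sup {ereal d | d. 0 \<le> d \<and>
      (\<forall>E. E \<subseteq> X \<and> ediam E < ereal d \<longrightarrow> (\<exists>U\<in>\<U>. E \<subseteq> U))}"

definition is_cover :: "'a set \<Rightarrow> 'a set set \<Rightarrow> bool" where
  "is_cover X \<U> \<longleftrightarrow> (\<forall>U\<in>\<U>. U \<subseteq> X) \<and> \<Union>\<U> = X"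

definition point_finite :: "'a set set \<Rightarrow> bool" where
  "point_finite \<U> \<longleftrightarrow> (\<forall>x. finite {U\<in>\<U>. x \<in> U})"

definition Delta_c :: "'a::metric_space set \<Rightarrow> real \<Rightarrow> ereal" where
  "Delta_c X R = Inf {cover_diam \<U> | \<U>. is_cover X \<U> \<and> point_finite \<U> \<and> lebesgue_num X \<U> \<ge> ereal R}"

definition locally_finite_metric :: "'a::metric_space set \<Rightarrow> bool" where
  "locally_finite_metric X \<longleftrightarrow> (\<forall>S. S \<subseteq> X \<and> bounded S \<longrightarrow> finite S)"

text \<open>c_0^+ realised inside the bounded (continuous) functions nat \<Rightarrow> real with the sup metric.\<close>
definition c0_plus :: "(nat \<Rightarrow>\<^sub>C real) set" where
  "c0_plus = {x. (\<lambda>i. apply_bcontfun x i) \<longlonglongrightarrow> 0 \<and> (\<forall>i. 0 \<le> apply_bcontfun x i)}"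

text \<open>f is a K-Lipschitz embedding of X into Y:
  injective, and Lip(f) * Lip(f^{-1}) \<le> K (Lipschitz constants being the least
  admissible constants, which are attained).\<close>
definition lipschitz_embedding :: "real \<Rightarrow> 'a::metric_space set \<Rightarrow> 'b::metric_space set \<Rightarrow> ('a \<Rightarrow> 'b) \<Rightarrow> bool" where
  "lipschitz_embedding K X Y f \<longleftrightarrow> inj_on f X \<and> f ` X \<subseteq> Y \<and>
     (\<exists>C D. C-lipschitz_on X f \<and> D-lipschitz_on (f ` X) (the_inv_into X f) \<and> C * D \<le> K)"

end

theory Submission
  imports Defs
begin

text \<open>For the first claim, cover \<open>X\<close> by all of its subsets of diameter at most \<open>R\<close>:
  its Lebesgue number is at least \<open>R\<close>, and a point \<open>x\<close> lies only in subsets of the finite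
  set \<open>X \<inter> cball x R\<close>, so the cover is point-finite.

  For the second, fix a base point \<open>x\<^sub>0\<close> and \<open>\<theta> = 2 / (2 + \<epsilon>)\<close>, and use as coordinates the
  tent functions \<open>x \<mapsto> max 0 (r - d(x, y))\<close> for \<open>y \<in> X\<close> and radii
  \<open>r = min (d(y, z)) (\<theta> d(y, x\<^sub>0))\<close>, \<open>z \<in> X\<close>. They are 1-Lipschitz; for \<open>d(a, x\<^sub>0) \<le> d(b, x\<^sub>0)\<close>
  the tent at \<open>b\<close> of radius \<open>min (d(a, b)) (\<theta> d(b, x\<^sub>0))\<close> separates \<open>a\<close> from \<open>b\<close> by at least
  \<open>\<theta>/2 \<cdot> d(a, b)\<close>; and since the radius at \<open>y\<close> is at most \<open>\<theta> d(y, x\<^sub>0)\<close> with \<open>\<theta> < 1\<close>, only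
  tents centred in a bounded, hence finite, set are non-zero at a given point, so each point is
  mapped into \<open>c\<^sub>0\<^sup>+\<close>.\<close>

lemma dist_le_ediam: "x \<in> E \<Longrightarrow> y \<in> E \<Longrightarrow> ereal (dist x y) \<le> ediam E"
  unfolding ediam_def by (auto intro!: SUP_upper2[of "(x, y)"])

lemma ediam_singleton [simp]: "ediam {x} = 0"
  unfolding ediam_def by simp

lemma subset_cball_if_ediam_le:
  assumes "x \<in> E" "ediam E \<le> ereal r"
  shows "E \<subseteq> cball x r"
proof
  fix y assume "y \<in> E"
  then have "ereal (dist x y) \<le> ereal r"
    using dist_le_ediam[OF \<open>x \<in> E\<close>] assms(2) order_trans by blast
  then show "y \<in> cball x r" by simp
qed

lemma locally_finite_metric_finite_cball:
  "locally_finite_metric X \<Longrightarrow> finite (X \<inter> cball x r)"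
  unfolding locally_finite_metric_def by auto

lemma locally_finite_metric_countable:
  fixes X :: "'a::metric_space set"
  assumes "locally_finite_metric X"
  shows "countable X"
proof -
  fix x0 :: 'a
  have "X = (\<Union>n::nat. X \<inter> cball x0 (real n))"
    by (auto intro: real_arch_simple)
  also have "countable \<dots>"
    by (rule countable_UN) (simp_all add: countable_finite locally_finite_metric_finite_cball[OF assms])
  finally show ?thesis .
qed

definition small_subsets :: "'a::metric_space set \<Rightarrow> real \<Rightarrow> 'a set set" where
  "small_subsets X R = {E. E \<subseteq> X \<and> ediam E \<le> ereal R}"

lemma is_cover_small_subsets: "0 \<le> R \<Longrightarrow> is_cover X (small_subsets X R)"
  unfolding is_cover_def small_subsets_def
  by (auto intro!: exI[of _ "{x}" for x])

lemma point_finite_small_subsets: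
  assumes "locally_finite_metric X"
  shows "point_finite (small_subsets X R)"
  unfolding point_finite_def
proof
  fix x
  have "{E \<in> small_subsets X R. x \<in> E} \<subseteq> Pow (X \<inter> cball x R)"
    using subset_cball_if_ediam_le by (fastforce simp: small_subsets_def)
  then show "finite {E \<in> small_subsets X R. x \<in> E}"
    using locally_finite_metric_finite_cball[OF assms] by (meson finite_Pow_iff finite_subset)
qed

lemma cover_diam_small_subsets: "cover_diam (small_subsets X R) \<le> ereal R"
  unfolding cover_diam_def small_subsets_def by (auto intro!: SUP_least)

lemma lebesgue_num_small_subsets: "0 \<le> R \<Longrightarrow> ereal R \<le> lebesgue_num X (small_subsets X R)"
  unfolding lebesgue_num_def
  by (rule Sup_upper) (auto simp: small_subsets_def intro!: exI[of _ R])

theorem Delta_c_le_if_locally_finite: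
  assumes "locally_finite_metric X" "0 \<le> R"
  shows "Delta_c X R \<le> ereal R"
proof -
  have "Delta_c X R \<le> cover_diam (small_subsets X R)"
    unfolding Delta_c_def using assms
    by (auto intro!: Inf_lower is_cover_small_subsets point_finite_small_subsets
        lebesgue_num_small_subsets)
  then show ?thesis
    using cover_diam_small_subsets order_trans by blast
qed

lemma tendsto_zero_if_finite_level_sets:
  fixes a :: "nat \<Rightarrow> real"
  assumes "\<And>\<eta>. \<eta> > 0 \<Longrightarrow> finite {n. \<eta> \<le> \<bar>a n\<bar>}"
  shows "a \<longlonglongrightarrow> 0"
proof (rule LIMSEQ_I)
  fix \<eta> :: real assume "0 < \<eta>"
  then obtain N where "\<And>n. \<eta> \<le> \<bar>a n\<bar> \<Longrightarrow> n < N"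
    using assms by (meson finite_nat_set_iff_bounded mem_Collect_eq)
  then show "\<exists>N. \<forall>n\<ge>N. norm (a n - 0) < \<eta>"
    by (metis not_le real_norm_def diff_zero)
qed

locale vanishing_lipschitz_family =
  fixes I :: "'i set" and \<phi> :: "'i \<Rightarrow> 'a::metric_space \<Rightarrow> real"
  assumes countable_index: "countable I"
    and nonneg: "i \<in> I \<Longrightarrow> 0 \<le> \<phi> i x"
    and lipschitz: "i \<in> I \<Longrightarrow> \<bar>\<phi> i a - \<phi> i b\<bar> \<le> dist a b"
    and finite_level_set: "\<eta> > 0 \<Longrightarrow> finite {i \<in> I. \<eta> \<le> \<phi> i x}"
begin

lemma bounded_at: "\<exists>B. \<forall>i\<in>I. \<phi> i x \<le> B"
proof -
  define F where "F = {i \<in> I. 1 \<le> \<phi> i x}"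
  have "finite F" unfolding F_def by (rule finite_level_set) simp
  have "\<phi> i x \<le> 1 + (\<Sum>j\<in>F. \<phi> j x)" if "i \<in> I" for i
  proof (cases "i \<in> F")
    case True
    then show ?thesis
      using member_le_sum[OF True _ \<open>finite F\<close>, of "\<lambda>j. \<phi> j x"] nonneg by (simp add: F_def)
  next
    case False
    then show ?thesis
      using that nonneg sum_nonneg[of F "\<lambda>j. \<phi> j x"] by (force simp: F_def)
  qed
  then show ?thesis by blast
qed

definition coords :: "'a \<Rightarrow> nat \<Rightarrow> real" where
  "coords x n = (if n \<in> to_nat_on I ` I then \<phi> (from_nat_into I n) x else 0)"

definition embedding :: "'a \<Rightarrow> (nat \<Rightarrow>\<^sub>C real)" where
  "embedding x = Bcontfun (coords x)"

lemma coords_to_nat_on: "i \<in> I \<Longrightarrow> coords x (to_nat_on I i) = \<phi> i x"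
  using countable_index by (simp add: coords_def)

lemma coords_nonneg: "0 \<le> coords x n"
  unfolding coords_def using countable_index nonneg by (auto simp: from_nat_into)

lemma apply_embedding [simp]: "apply_bcontfun (embedding x) = coords x"
proof -
  obtain B where B: "\<And>i. i \<in> I \<Longrightarrow> \<phi> i x \<le> B" using bounded_at by blast
  have "coords x \<in> bcontfun"
  proof (rule bcontfun_normI)
    fix n
    show "norm (coords x n) \<le> max 0 B"
      using coords_nonneg[of x n] B countable_index
      by (auto simp: coords_def from_nat_into le_max_iff_disj)
  qed simp
  then show ?thesis by (simp add: embedding_def Bcontfun_inverse)
qed

lemma embedding_in_c0_plus: "embedding x \<in> c0_plus"
proof -
  have "coords x \<longlonglongrightarrow> 0"
  proof (rule tendsto_zero_if_finite_level_sets)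
    fix \<eta> :: real assume "\<eta> > 0"
    then have "{n. \<eta> \<le> \<bar>coords x n\<bar>} \<subseteq> to_nat_on I ` {i \<in> I. \<eta> \<le> \<phi> i x}"
      by (auto simp: coords_def countable_index from_nat_into image_iff abs_of_nonneg[OF nonneg]
          intro: bexI[of _ "from_nat_into I n" for n] split: if_splits)
    then show "finite {n. \<eta> \<le> \<bar>coords x n\<bar>}"
      using finite_level_set[OF \<open>\<eta> > 0\<close>] finite_surj by blast
  qed
  then show ?thesis
    unfolding c0_plus_def using coords_nonneg by simp
qed

lemma dist_embedding_le: "dist (embedding a) (embedding b) \<le> dist a b"
proof (rule dist_bound)
  fix n
  show "dist (embedding a n) (embedding b n) \<le> dist a b"
    using lipschitz by (auto simp: coords_def dist_real_def countable_index from_nat_into)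
qed

lemma dist_coordinate_le_dist_embedding:
  assumes "i \<in> I"
  shows "\<bar>\<phi> i a - \<phi> i b\<bar> \<le> dist (embedding a) (embedding b)"
proof -
  have "dist (embedding a (to_nat_on I i)) (embedding b (to_nat_on I i))
      \<le> dist (embedding a) (embedding b)"
    by (rule dist_bounded)
  then show ?thesis by (simp add: coords_to_nat_on[OF assms] dist_real_def)
qed

theorem lipschitz_embedding_if_separating:
  assumes "c > 0" and separating: "\<And>a b. a \<in> X \<Longrightarrow> b \<in> X \<Longrightarrow> \<exists>i\<in>I. c * dist a b \<le> \<bar>\<phi> i a - \<phi> i b\<bar>"
  shows "lipschitz_embedding (1 / c) X c0_plus embedding"
proof -
  have lower: "c * dist a b \<le> dist (embedding a) (embedding b)" if "a \<in> X" "b \<in> X" for a b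
    using separating[OF that] dist_coordinate_le_dist_embedding order_trans by blast
  have inj: "inj_on embedding X"
    by (rule inj_onI) (use lower \<open>c > 0\<close> in \<open>fastforce simp: mult_le_0_iff\<close>)
  have "1-lipschitz_on X embedding"
    using dist_embedding_le by (auto intro: lipschitz_onI)
  moreover have "(1 / c)-lipschitz_on (embedding ` X) (the_inv_into X embedding)"
  proof (rule lipschitz_onI)
    fix u v assume "u \<in> embedding ` X" "v \<in> embedding ` X"
    then obtain a b where "a \<in> X" "b \<in> X" "u = embedding a" "v = embedding b" by blast
    then show "dist (the_inv_into X embedding u) (the_inv_into X embedding v) \<le> 1 / c * dist u v"
      using lower[of a b] inj \<open>c > 0\<close> by (simp add: the_inv_into_f_f field_simps)
  qed (use \<open>c > 0\<close> in simp)
  moreover have "1 * (1 / c) \<le> 1 / c" by simp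
  ultimately show ?thesis
    unfolding lipschitz_embedding_def using inj embedding_in_c0_plus by blast
qed

end

definition tent :: "'a::metric_space \<times> real \<Rightarrow> 'a \<Rightarrow> real" where
  "tent i x = max 0 (snd i - dist x (fst i))"

definition tent_index :: "'a::metric_space set \<Rightarrow> 'a \<Rightarrow> real \<Rightarrow> ('a \<times> real) set" where
  "tent_index X x\<^sub>0 \<theta> = (\<lambda>(y, z). (y, min (dist y z) (\<theta> * dist y x\<^sub>0))) ` (X \<times> X)"

lemma tent_Pair: "tent (y, r) x = max 0 (r - dist x y)"
  by (simp add: tent_def)

lemma tent_nonneg: "0 \<le> tent i x"
  by (simp add: tent_def)

lemma abs_tent_diff_le: "\<bar>tent i a - tent i b\<bar> \<le> dist a b"
  unfolding tent_def
  by (auto simp: abs_le_iff max_def) (smt (verit) dist_triangle2 dist_commute)+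

lemma countable_tent_index:
  "locally_finite_metric X \<Longrightarrow> countable (tent_index X x\<^sub>0 \<theta>)"
  unfolding tent_index_def using locally_finite_metric_countable by blast

lemma tent_index_radius:
  assumes "(y, r) \<in> tent_index X x\<^sub>0 \<theta>" "0 \<le> \<theta>"
  shows "y \<in> X" "0 \<le> r" "r \<le> \<theta> * dist y x\<^sub>0"
    and "r \<in> insert (\<theta> * dist y x\<^sub>0) (dist y ` (X \<inter> cball y (\<theta> * dist y x\<^sub>0)))"
  using assms by (auto simp: tent_index_def min_def)

text \<open>The radius bound \<open>r \<le> \<theta> d(y, x\<^sub>0)\<close> with \<open>\<theta> < 1\<close> confines the centres of the tents that
  are positive at \<open>x\<close> to a ball around \<open>x\<close>.\<close>
lemma dist_center_le_if_tent_pos: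
  assumes "(y, r) \<in> tent_index X x\<^sub>0 \<theta>" "0 \<le> \<theta>" "\<theta> < 1" "0 < tent (y, r) x"
  shows "dist x y \<le> \<theta> * dist x x\<^sub>0 / (1 - \<theta>)"
proof -
  have "dist x y < \<theta> * dist y x\<^sub>0"
    using assms(4) tent_index_radius(3)[OF assms(1,2)] by (auto simp: tent_Pair max_def split: if_splits)
  also have "\<dots> \<le> \<theta> * (dist x y + dist x x\<^sub>0)"
    using assms(2) by (intro mult_left_mono) (metis dist_commute dist_triangle)
  finally have "(1 - \<theta>) * dist x y \<le> \<theta> * dist x x\<^sub>0"
    by (simp add: algebra_simps)
  then show ?thesis
    using assms(3) by (simp add: field_simps)
qed

lemma finite_tent_level_set:
  assumes "locally_finite_metric X" "0 \<le> \<theta>" "\<theta> < 1" "\<eta> > 0"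
  shows "finite {i \<in> tent_index X x\<^sub>0 \<theta>. \<eta> \<le> tent i x}"
proof (rule finite_subset)
  let ?F = "X \<inter> cball x (\<theta> * dist x x\<^sub>0 / (1 - \<theta>))"
  let ?radii = "\<lambda>y. insert (\<theta> * dist y x\<^sub>0) (dist y ` (X \<inter> cball y (\<theta> * dist y x\<^sub>0)))"
  show "{i \<in> tent_index X x\<^sub>0 \<theta>. \<eta> \<le> tent i x} \<subseteq> Sigma ?F ?radii"
  proof
    fix i assume i: "i \<in> {i \<in> tent_index X x\<^sub>0 \<theta>. \<eta> \<le> tent i x}"
    obtain y r where "i = (y, r)" by fastforce
    with i show "i \<in> Sigma ?F ?radii"
      using assms dist_center_le_if_tent_pos tent_index_radius by fastforce
  qed
  show "finite (Sigma ?F ?radii)"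
    using locally_finite_metric_finite_cball[OF assms(1)] by (intro finite_SigmaI) auto
qed

lemma tent_index_separates_closer:
  assumes "a \<in> X" "b \<in> X" "0 \<le> \<theta>" "\<theta> \<le> 2" "dist a x\<^sub>0 \<le> dist b x\<^sub>0"
  shows "\<exists>i\<in>tent_index X x\<^sub>0 \<theta>. \<theta> / 2 * dist a b \<le> \<bar>tent i a - tent i b\<bar>"
proof -
  define r where "r = min (dist b a) (\<theta> * dist b x\<^sub>0)"
  have "(b, r) \<in> tent_index X x\<^sub>0 \<theta>"
    unfolding tent_index_def r_def using assms by force
  moreover have "\<theta> / 2 * dist a b \<le> r"
  proof -
    have "dist a b \<le> 2 * dist b x\<^sub>0"
      using assms(5) dist_triangle2[of a b x\<^sub>0] by simp
    then have "\<theta> / 2 * dist a b \<le> \<theta> * dist b x\<^sub>0"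
      using mult_left_mono[of _ _ "\<theta> / 2"] assms(3) by fastforce
    moreover have "\<theta> / 2 * dist a b \<le> dist a b"
      using assms(3,4) by (intro mult_left_le_one_le) auto
    ultimately show ?thesis by (simp add: r_def dist_commute)
  qed
  moreover have "tent (b, r) b = r" "tent (b, r) a = 0"
    using assms(3) by (auto simp: tent_Pair r_def dist_commute)
  ultimately show ?thesis by force
qed

lemma tent_index_separates:
  assumes "a \<in> X" "b \<in> X" "0 \<le> \<theta>" "\<theta> \<le> 2"
  shows "\<exists>i\<in>tent_index X x\<^sub>0 \<theta>. \<theta> / 2 * dist a b \<le> \<bar>tent i a - tent i b\<bar>"
proof (cases "dist a x\<^sub>0 \<le> dist b x\<^sub>0")
  case True
  then show ?thesis using tent_index_separates_closer assms by blast
next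
  case False
  then show ?thesis
    using tent_index_separates_closer[of b X a \<theta> x\<^sub>0] assms
    by (auto simp: dist_commute abs_minus_commute)
qed

lemma vanishing_lipschitz_family_tents:
  assumes "locally_finite_metric X" "0 \<le> \<theta>" "\<theta> < 1"
  shows "vanishing_lipschitz_family (tent_index X x\<^sub>0 \<theta>) tent"
  using assms by unfold_locales
    (auto simp: countable_tent_index tent_nonneg abs_tent_diff_le finite_tent_level_set)

theorem lipschitz_embedding_c0_plus_if_locally_finite:
  fixes X :: "'a::metric_space set"
  assumes "locally_finite_metric X" "\<epsilon> > 0"
  shows "\<exists>f::'a \<Rightarrow> (nat \<Rightarrow>\<^sub>C real). lipschitz_embedding (2 + \<epsilon>) X c0_plus f"
proof -
  define \<theta> :: real where "\<theta> = 2 / (2 + \<epsilon>)"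
  have \<theta>: "0 < \<theta>" "\<theta> < 1" "1 / (\<theta> / 2) = 2 + \<epsilon>"
    using assms(2) by (auto simp: \<theta>_def)
  fix x\<^sub>0 :: 'a
  interpret vanishing_lipschitz_family "tent_index X x\<^sub>0 \<theta>" tent
    by (rule vanishing_lipschitz_family_tents) (use assms(1) \<theta> in auto)
  have "lipschitz_embedding (1 / (\<theta> / 2)) X c0_plus embedding"
  proof (rule lipschitz_embedding_if_separating)
    fix a b assume "a \<in> X" "b \<in> X"
    then show "\<exists>i\<in>tent_index X x\<^sub>0 \<theta>. \<theta> / 2 * dist a b \<le> \<bar>tent i a - tent i b\<bar>"
      using \<theta> by (intro tent_index_separates) auto
  qed (use \<theta> in simp)
  then show ?thesis
    using \<theta>(3) by auto
qed

theorem proposition4p1: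
  "(\<forall>(X::'a::metric_space set). locally_finite_metric X \<longrightarrow>
        (\<forall>R::real. 0 \<le> R \<longrightarrow> Delta_c X R \<le> ereal R))
   \<and> (\<forall>\<epsilon>::real. \<epsilon> > 0 \<longrightarrow>
        (\<forall>(X::'a::metric_space set). locally_finite_metric X \<longrightarrow>
           (\<exists>f::'a \<Rightarrow> (nat \<Rightarrow>\<^sub>C real). lipschitz_embedding (2 + \<epsilon>) X c0_plus f)))"
  using Delta_c_le_if_locally_finite lipschitz_embedding_c0_plus_if_locally_finite by blast

end
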